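(* Let $\Sigma=\{\sigma_{\mathbf{a}|\mathbf{x}}\}$ be a no-signaling assemblage of operators acting on $\mathbb{C}^d$. If $\Sigma$ is on the edge of the set of no-signaling assemblages, then $$\sum_{\mathbf{a}|\mathbf{x}}\mathrm{rank}(\sigma_{\mathbf{a}|\mathbf{x}})\le\Big(\prod_{i=1}^n\mathcal{X}_i-1\Big)\Big(\prod_{i=1}^n\mathcal{A}_i\Big)d.$$
   Context: Fix $n\ge 1$, integers $\mathcal{A}_i,\mathcal{X}_i\ge 1$ and $d\ge1$; write $\mathbf{a}|\mathbf{x}=a_1\dots a_n|x_1\dots x_n$ with $a_i\in\{0,\dots,\mathcal{A}_i-1\}$, $x_i\in\{0,\dots,\mathcal{X}_i-1\}$; the sum runs over all such indices. A no-signaling assemblage is a collection of positive semidefinite operators $\sigma_{\mathbf{a}|\mathbf{x}}$ on $\mathbb{C}^d$ with $\sum_{\mathbf{a}}\sigma_{\mathbf{a}|\mathbf{x}}=\rho_B$ for all $\mathbf{x}$ ($\rho_B$ a fixed density operator) and such that for every $I=\{i_1,\dots,i_s\}\subset\{1,\dots,n\}$, $1\le s<n$, the sum $\sum_{a_j:\,j\notin I}\sigma_{\mathbf{a}|\mathbf{x}}$ depends only on $a_{i_k},x_{i_k}$. An LHS assemblage is one of the form $\sigma_{\mathbf{a}|\mathbf{x}}=\sum_j q_j\prod_i p^{(A_i)}_j(a_i|x_i)\rho_j$ with probability weights $q_j$, density operators $\rho_j$ and conditional distributions $p^{(A_i)}_j$. $\Sigma$ is on the edge if any decomposition $\Sigma=\epsilon\Sigma_1+(1-\epsilon)\Sigma_2$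 with $\epsilon\in[0,1]$, $\Sigma_1$ LHS and $\Sigma_2$ no-signaling forces $\epsilon=0$. *)

theory Defs
  imports "HOL-Analysis.Analysis"
begin

text \<open>Operators on C^d are represented as matrices of type complex^'d^'d, with d = CARD('d).
  Index tuples a = a_1 ... a_n are functions in PiE {..<n} (\<lambda>i. {..<A i}) (parties indexed 0..n-1).\<close>

definition psd :: "complex^'d^'d \<Rightarrow> bool" where
  "psd M \<longleftrightarrow> (\<forall>v :: complex^'d. (\<Sum>i\<in>UNIV. cnj (v $ i) * ((M *v v) $ i)) \<in> \<real> \<and>
                     0 \<le> Re (\<Sum>i\<in>UNIV. cnj (v $ i) * ((M *v v) $ i)))"

definition density :: "complex^'d^'d \<Rightarrow> bool" where
  "density M \<longleftrightarrow> psd M \<and> trace M = 1"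

definition tuples :: "nat \<Rightarrow> (nat \<Rightarrow> nat) \<Rightarrow> (nat \<Rightarrow> nat) set" where
  "tuples n K = PiE {..<n} (\<lambda>i. {..<K i})"

definition marginal :: "nat \<Rightarrow> (nat \<Rightarrow> nat) \<Rightarrow> nat set \<Rightarrow>
    ((nat \<Rightarrow> nat) \<Rightarrow> (nat \<Rightarrow> nat) \<Rightarrow> complex^'d^'d) \<Rightarrow> (nat \<Rightarrow> nat) \<Rightarrow> (nat \<Rightarrow> nat) \<Rightarrow> complex^'d^'d" where
  "marginal n A I \<sigma> a x = (\<Sum>b\<in>{b \<in> tuples n A. \<forall>i\<in>I. b i = a i}. \<sigma> b x)"

definition no_signaling ::
  "nat \<Rightarrow> (nat \<Rightarrow> nat) \<Rightarrow> (nat \<Rightarrow> nat) \<Rightarrow> ((nat \<Rightarrow> nat) \<Rightarrow> (nat \<Rightarrow> nat) \<Rightarrow> complex^'d^'d) \<Rightarrow> bool" where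
  "no_signaling n A X \<sigma> \<longleftrightarrow>
     (\<forall>a\<in>tuples n A. \<forall>x\<in>tuples n X. psd (\<sigma> a x)) \<and>
     (\<exists>\<rho>. density \<rho> \<and> (\<forall>x\<in>tuples n X. (\<Sum>a\<in>tuples n A. \<sigma> a x) = \<rho>)) \<and>
     (\<forall>I. I \<subseteq> {..<n} \<and> I \<noteq> {} \<and> I \<noteq> {..<n} \<longrightarrow>
        (\<forall>a\<in>tuples n A. \<forall>a'\<in>tuples n A. \<forall>x\<in>tuples n X. \<forall>x'\<in>tuples n X.
           (\<forall>i\<in>I. a i = a' i \<and> x i = x' i) \<longrightarrow>
           marginal n A I \<sigma> a x = marginal n A I \<sigma> a' x'))"

definition LHS ::
  "nat \<Rightarrow> (nat \<Rightarrow> nat) \<Rightarrow> (nat \<Rightarrow> nat) \<Rightarrow> ((nat \<Rightarrow> nat) \<Rightarrow> (nat \<Rightarrow> nat) \<Rightarrow> complex^'d^'d) \<Rightarrow> bool" where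
  "LHS n A X \<sigma> \<longleftrightarrow>
     (\<exists>(m::nat) (q::nat \<Rightarrow> real) (p::nat \<Rightarrow> nat \<Rightarrow> nat \<Rightarrow> nat \<Rightarrow> real) (\<rho>::nat \<Rightarrow> complex^'d^'d).
        (\<forall>j<m. 0 \<le> q j) \<and> (\<Sum>j<m. q j) = 1 \<and>
        (\<forall>j<m. density (\<rho> j)) \<and>
        (\<forall>j<m. \<forall>i<n. \<forall>xi<X i. (\<forall>ai<A i. 0 \<le> p j i ai xi) \<and> (\<Sum>ai<A i. p j i ai xi) = 1) \<and>
        (\<forall>a\<in>tuples n A. \<forall>x\<in>tuples n X.
           \<sigma> a x = (\<Sum>j<m. (q j * (\<Prod>i<n. p j i (a i) (x i))) *\<^sub>R \<rho> j)))"

definition on_edge ::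
  "nat \<Rightarrow> (nat \<Rightarrow> nat) \<Rightarrow> (nat \<Rightarrow> nat) \<Rightarrow> ((nat \<Rightarrow> nat) \<Rightarrow> (nat \<Rightarrow> nat) \<Rightarrow> complex^'d^'d) \<Rightarrow> bool" where
  "on_edge n A X \<sigma> \<longleftrightarrow>
     (\<forall>(\<epsilon>::real) \<sigma>1 \<sigma>2. 0 \<le> \<epsilon> \<and> \<epsilon> \<le> 1 \<and> LHS n A X \<sigma>1 \<and> no_signaling n A X \<sigma>2 \<and>
        (\<forall>a\<in>tuples n A. \<forall>x\<in>tuples n X. \<sigma> a x = \<epsilon> *\<^sub>R \<sigma>1 a x + (1 - \<epsilon>) *\<^sub>R \<sigma>2 a x)
        \<longrightarrow> \<epsilon> = 0)"

end

theory Submission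
  imports Defs
begin

text \<open>Suppose the total rank exceeds (|X| - 1) |A| d, i.e. the rank deficiencies
  d - rank sigma_{a|x} add up to less than |A| d. For every input x, each outcome tuple is the
  response to x of equally many deterministic strategies g, so averaging over g yields one
  strategy whose deficiencies d - rank sigma_{g(x)|x}, summed over all inputs x, are less than d.
  The ranges of these operators then share a nonzero vector v, and by Cauchy-Schwarz each
  sigma_{g(x)|x} dominates e |v><v| / |v|^2 for some e > 0. Subtracting e times the
  deterministic LHS assemblage built from g and |v><v| / |v|^2 and renormalising leaves a
  no-signaling assemblage, so sigma is not on the edge.\<close>

section \<open>Positive semidefinite matrices\<close>

definition cinner :: "complex^'n \<Rightarrow> complex^'n \<Rightarrow> complex" where
  "cinner u v = (\<Sum>i\<in>UNIV. cnj (u $ i) * v $ i)"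

definition sesq :: "complex^'n^'n \<Rightarrow> complex^'n \<Rightarrow> complex^'n \<Rightarrow> complex" where
  "sesq M u w = cinner u (M *v w)"

lemma cinner_self: "cinner v v = of_real ((norm v)\<^sup>2)"
proof -
  have "cnj z * z = of_real ((cmod z)\<^sup>2)" for z
    by (metis complex_norm_square mult.commute)
  then show ?thesis
    by (simp add: cinner_def norm_vec_def L2_set_def sum_nonneg)
qed

lemma cinner_commute: "cinner v u = cnj (cinner u v)"
  by (simp add: cinner_def mult.commute)

lemma cinner_diff_left: "cinner (x - y) z = cinner x z - cinner y z"
  by (simp add: cinner_def algebra_simps sum_subtractf)

lemma cinner_diff_right: "cinner z (x - y) = cinner z x - cinner z y"
  by (simp add: cinner_def algebra_simps sum_subtractf)

lemma cinner_add_right: "cinner z (x + y) = cinner z x + cinner z y"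
  by (simp add: cinner_def algebra_simps sum.distrib)

lemma cinner_scale_left: "cinner (a *s x) y = cnj a * cinner x y"
  by (simp add: cinner_def sum_distrib_left mult.assoc)

lemma cinner_scale_right: "cinner x (a *s y) = a * cinner x y"
  by (simp add: cinner_def sum_distrib_left mult_ac)

lemma matrix_scaleR_vector_mult: "((c::real) *\<^sub>R (M::complex^'n^'n)) *v w = of_real c *s (M *v w)"
  by (simp add: matrix_vector_mult_def vec_eq_iff sum_distrib_left mult.assoc
      scaleR_conv_of_real[where 'a=complex])

lemma sesq_add: "sesq (M + N) u w = sesq M u w + sesq N u w"
  by (simp add: sesq_def matrix_vector_mult_add_rdistrib cinner_add_right)

lemma sesq_diff: "sesq (M - N) u w = sesq M u w - sesq N u w"
  by (simp add: sesq_def matrix_vector_mult_diff_rdistrib cinner_diff_right)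

lemma sesq_scaleR: "sesq ((c::real) *\<^sub>R M) u w = of_real c * sesq M u w"
  by (simp add: sesq_def matrix_scaleR_vector_mult cinner_scale_right)

lemma sesq_diff_scale:
  "sesq M (u - a *s w) (u - a *s w)
     = sesq M u u - a * sesq M u w - cnj a * sesq M w u + cnj a * a * sesq M w w"
  by (simp add: sesq_def vector_scalar_commute
      cinner_diff_left cinner_diff_right cinner_scale_left cinner_scale_right algebra_simps)

lemma psd_iff_sesq: "psd M \<longleftrightarrow> (\<forall>v. sesq M v v \<in> \<real> \<and> 0 \<le> Re (sesq M v v))"
  by (simp add: psd_def sesq_def cinner_def)

lemma psd_sesq_real: "psd M \<Longrightarrow> sesq M v v = of_real (Re (sesq M v v))"
  by (simp add: psd_iff_sesq complex_is_Real_iff complex_eq_iff)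

lemma psd_add: "psd M \<Longrightarrow> psd N \<Longrightarrow> psd (M + N)"
  by (simp add: psd_iff_sesq sesq_add)

lemma psd_scaleR: "psd M \<Longrightarrow> 0 \<le> c \<Longrightarrow> psd (c *\<^sub>R M)"
  by (simp add: psd_iff_sesq sesq_scaleR complex_is_Real_iff)

lemma psd_0: "psd 0"
  by (simp add: psd_iff_sesq sesq_def cinner_def)

lemma psd_sum: "(\<And>x. x \<in> S \<Longrightarrow> psd (f x)) \<Longrightarrow> psd (\<Sum>x\<in>S. f x)"
  by (induction S rule: infinite_finite_induct) (auto intro: psd_add psd_0)

text \<open>Polarisation: the imaginary parts of the form on u + w and u + i w vanish.\<close>
lemma psd_sesq_hermitian:
  assumes "psd M" shows "sesq M u w = cnj (sesq M w u)"
proof -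
  have "Im (sesq M v v) = 0" for v
    using assms by (simp add: psd_iff_sesq complex_is_Real_iff)
  from this[of "u - (-1) *s w"] this[of "u - (-\<i>) *s w"] this[of u] this[of w] show ?thesis
    unfolding sesq_diff_scale by (simp add: complex_eq_iff)
qed

lemma quadratic_nonneg_imp_bound:
  fixes b c s :: real
  assumes "\<And>t. 0 \<le> c - 2 * t * b + t\<^sup>2 * b * s" "0 \<le> b" "0 \<le> c" "0 \<le> s"
  shows "b \<le> c * s"
proof -
  consider "b = 0" | "b > 0" "s = 0" | "b > 0" "s > 0"
    using assms(2,4) by linarith
  then show ?thesis
  proof cases
    case 1
    then show ?thesis using assms(3,4) by simp
  next
    case 2
    have "2 * ((c + 1) / (2 * b)) * b = c + 1"
      using 2 by simp
    then show ?thesis using assms(1)[of "(c + 1) / (2 * b)"] 2 by simp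
  next
    case 3
    have "c - 2 * (1 / s) * b + (1 / s)\<^sup>2 * b * s = c - b / s"
      using 3 by (simp add: power2_eq_square)
    then have "b / s \<le> c"
      using assms(1)[of "1 / s"] by simp
    then show ?thesis using 3 by (simp add: divide_le_eq)
  qed
qed

lemma psd_cauchy_schwarz:
  assumes "psd M"
  shows "(cmod (sesq M u w))\<^sup>2 \<le> Re (sesq M u u) * Re (sesq M w w)"
proof -
  define \<beta> where "\<beta> = sesq M w u"
  have hermitian: "sesq M u w = cnj \<beta>"
    unfolding \<beta>_def by (rule psd_sesq_hermitian[OF assms])
  have "0 \<le> Re (sesq M u u) - 2 * t * (cmod \<beta>)\<^sup>2 + t\<^sup>2 * (cmod \<beta>)\<^sup>2 * Re (sesq M w w)"
    for t :: real
  proof -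
    let ?v = "u - (of_real t * \<beta>) *s w"
    have "sesq M ?v ?v
        = sesq M u u - 2 * of_real t * (\<beta> * cnj \<beta>) + of_real t * of_real t * (\<beta> * cnj \<beta>) * sesq M w w"
      unfolding sesq_diff_scale hermitian \<beta>_def[symmetric] by (simp add: algebra_simps)
    also have "\<dots> = sesq M u u - of_real (2 * t * (cmod \<beta>)\<^sup>2 - t\<^sup>2 * (cmod \<beta>)\<^sup>2 * Re (sesq M w w))"
      by (subst psd_sesq_real[OF assms, of w]) (simp add: complex_norm_square[symmetric] power2_eq_square)
    finally have "sesq M ?v ?v
        = sesq M u u - of_real (2 * t * (cmod \<beta>)\<^sup>2 - t\<^sup>2 * (cmod \<beta>)\<^sup>2 * Re (sesq M w w))" .
    moreover have "0 \<le> Re (sesq M ?v ?v)"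
      using assms psd_iff_sesq by blast
    ultimately show ?thesis
      by simp
  qed
  then have "(cmod \<beta>)\<^sup>2 \<le> Re (sesq M u u) * Re (sesq M w w)"
    by (rule quadratic_nonneg_imp_bound) (use assms in \<open>simp_all add: psd_iff_sesq\<close>)
  then show ?thesis by (simp add: hermitian)
qed

definition proj :: "complex^'n \<Rightarrow> complex^'n^'n" where
  "proj v = (\<chi> i j. v $ i * cnj (v $ j) / of_real ((norm v)\<^sup>2))"

lemma proj_vector_mult: "proj v *v u = (cinner v u / of_real ((norm v)\<^sup>2)) *s v"
  by (simp add: proj_def matrix_vector_mult_def vec_eq_iff cinner_def sum_distrib_left
      sum_divide_distrib mult_ac)

lemma sesq_proj: "sesq (proj v) u u = of_real ((cmod (cinner u v))\<^sup>2 / (norm v)\<^sup>2)"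
proof -
  have "sesq (proj v) u u = cinner u v * cnj (cinner u v) / of_real ((norm v)\<^sup>2)"
    by (simp add: sesq_def proj_vector_mult cinner_scale_right cinner_commute[of v u])
  also have "\<dots> = of_real ((cmod (cinner u v))\<^sup>2) / of_real ((norm v)\<^sup>2)"
    by (simp only: complex_norm_square)
  finally show ?thesis
    by simp
qed

lemma density_proj:
  assumes "v \<noteq> 0" shows "density (proj v)"
proof -
  have "psd (proj v)"
    by (simp add: psd_iff_sesq sesq_proj)
  moreover have "trace (proj v) = cinner v v / of_real ((norm v)\<^sup>2)"
    by (simp add: trace_def proj_def cinner_def sum_divide_distrib mult.commute)
  ultimately show ?thesis
    using assms by (simp add: density_def cinner_self)
qed

text \<open>For M w = v, Cauchy-Schwarz gives |<u, v>|^2 = |<u, M w>|^2 \<le> <u, M u> <w, M w>.\<close>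
lemma psd_diff_proj:
  assumes M: "psd M" and w: "M *v w = v" and v: "v \<noteq> 0"
  shows "\<exists>c>0. psd (M - c *\<^sub>R proj v)"
proof -
  define s where "s = Re (sesq M w w)"
  define r where "r = (norm v)\<^sup>2"
  have r: "r > 0"
    using v by (simp add: r_def)
  have sesq_w: "sesq M u w = cinner u v" for u
    by (simp add: sesq_def w)
  have cauchy_schwarz: "(cmod (cinner u v))\<^sup>2 \<le> Re (sesq M u u) * s" for u
    using psd_cauchy_schwarz[OF M, of u w] unfolding sesq_w[of u] s_def .
  have s: "s > 0"
  proof -
    have "s \<ge> 0"
      using M by (simp add: psd_iff_sesq s_def)
    moreover have "s \<noteq> 0"
    proof
      assume "s = 0"
      with cauchy_schwarz[of v] have "r\<^sup>2 \<le> 0"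
        by (simp add: cinner_self r_def)
      with r show False
        by simp
    qed
    ultimately show ?thesis
      by simp
  qed
  have "psd (M - (r / s) *\<^sub>R proj v)"
    unfolding psd_iff_sesq
  proof
    fix u
    have le: "r / s * ((cmod (cinner u v))\<^sup>2 / r) \<le> Re (sesq M u u)"
      using cauchy_schwarz[of u] r s by (simp add: field_simps)
    have "sesq (M - (r / s) *\<^sub>R proj v) u u = sesq M u u - of_real (r / s * ((cmod (cinner u v))\<^sup>2 / r))"
      by (simp add: sesq_diff sesq_scaleR sesq_proj r_def)
    then show "sesq (M - (r / s) *\<^sub>R proj v) u u \<in> \<real> \<and> 0 \<le> Re (sesq (M - (r / s) *\<^sub>R proj v) u u)"
      using M le by (simp add: psd_iff_sesq)
  qed
  then show ?thesis
    using r s by (meson divide_pos_pos)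
qed

lemma psd_diff_proj_common:
  assumes T: "finite T" and M: "\<And>x. x \<in> T \<Longrightarrow> psd (M x)"
    and range: "\<And>x. x \<in> T \<Longrightarrow> \<exists>w. M x *v w = v" and v: "v \<noteq> 0"
  shows "\<exists>e>0. e < 1 \<and> (\<forall>x\<in>T. psd (M x - e *\<^sub>R proj v))"
proof -
  have "\<forall>x\<in>T. \<exists>c>0. psd (M x - c *\<^sub>R proj v)"
    using psd_diff_proj M range v by metis
  then obtain c where c: "\<And>x. x \<in> T \<Longrightarrow> c x > 0 \<and> psd (M x - c x *\<^sub>R proj v)"
    by metis
  define e where "e = Min (insert (1 / 2) (c ` T))"
  have e_le: "e \<le> 1 / 2" "\<And>x. x \<in> T \<Longrightarrow> e \<le> c x"
    unfolding e_def using T by (intro Min_le; simp)+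
  have "e > 0"
    using T c by (simp add: e_def)
  have "psd (M x - e *\<^sub>R proj v)" if "x \<in> T" for x
  proof -
    have "psd (proj v)"
      using density_proj[OF v] by (simp add: density_def)
    moreover have "M x - e *\<^sub>R proj v = (M x - c x *\<^sub>R proj v) + (c x - e) *\<^sub>R proj v"
      by (simp add: algebra_simps)
    ultimately show ?thesis
      using c[OF that] e_le(2)[OF that] by (metis diff_ge_0_iff_ge psd_add psd_scaleR)
  qed
  with \<open>e > 0\<close> e_le(1) show ?thesis
    by force
qed

section \<open>Hermitian matrices and dimension\<close>

lemma matrix_vector_mult_axis: "((M::'a::comm_ring_1^'n^'m) *v axis j 1) $ i = M $ i $ j"
proof -
  have "M $ i $ k * axis j 1 $ k = (if k = j then M $ i $ j else 0)" for k
    by (simp add: axis_def)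
  then show ?thesis
    by (simp add: matrix_vector_mult_def)
qed

lemma cinner_axis: "cinner (axis i 1) y = y $ i"
proof -
  have "cnj (axis i 1 $ k) * y $ k = (if k = i then y $ i else 0)" for k
    by (simp add: axis_def)
  then show ?thesis
    by (simp add: cinner_def)
qed

lemma sesq_axis: "sesq M (axis i 1) (axis j 1) = M $ i $ j"
  by (simp add: sesq_def cinner_axis matrix_vector_mult_axis)

lemma psd_hermitian_entry: "psd M \<Longrightarrow> M $ i $ j = cnj (M $ j $ i)"
  using psd_sesq_hermitian[of M "axis i 1" "axis j 1"] by (simp add: sesq_axis)

definition vcnj :: "complex^'n \<Rightarrow> complex^'n" where
  "vcnj u = (\<chi> i. cnj (u $ i))"

lemma vcnj_eq_0_iff [simp]: "vcnj u = 0 \<longleftrightarrow> u = 0"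
  by (simp add: vcnj_def vec_eq_iff)

text \<open>The rows of a Hermitian matrix are the conjugates of its columns, so the conjugated
  row space lies in the range.\<close>
lemma psd_vcnj_row_space_in_range:
  assumes M: "psd M" and u: "u \<in> vec.span (rows M)"
  shows "\<exists>w. M *v w = vcnj u"
proof -
  let ?R = "{u. \<exists>w. M *v w = vcnj u}"
  have "vec.subspace ?R"
    unfolding vec.subspace_def
  proof (intro conjI ballI allI)
    have "M *v 0 = vcnj 0"
      by (simp add: vcnj_def vec_eq_iff)
    then show "0 \<in> ?R" by blast
  next
    fix x y assume "x \<in> ?R" "y \<in> ?R"
    then obtain wx wy where "M *v wx = vcnj x" "M *v wy = vcnj y" by auto
    then have "M *v (wx + wy) = vcnj (x + y)"
      by (simp add: matrix_vector_right_distrib vcnj_def vec_eq_iff)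
    then show "x + y \<in> ?R" by blast
  next
    fix c x assume "x \<in> ?R"
    then obtain wx where "M *v wx = vcnj x" by auto
    then have "M *v (cnj c *s wx) = vcnj (c *s x)"
      by (simp add: vector_scalar_commute vcnj_def vec_eq_iff)
    then show "c *s x \<in> ?R" by blast
  qed
  moreover have "rows M \<subseteq> ?R"
  proof
    fix x assume "x \<in> rows M"
    then obtain i where x: "x = row i M" by (auto simp: rows_def)
    have "(M *v axis i 1) $ k = vcnj x $ k" for k
      using psd_hermitian_entry[OF M, of k i] by (simp add: matrix_vector_mult_axis vcnj_def x row_def)
    then have "M *v axis i 1 = vcnj x"
      by (simp add: vec_eq_iff)
    then show "x \<in> ?R" by blast
  qed
  ultimately have "vec.span (rows M) \<subseteq> ?R"
    by (intro vec.span_minimal)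
  then show ?thesis
    using u by blast
qed

lemma vec_dim_le_card: "vec.dim (S :: ('a::field^'n) set) \<le> CARD('n)"
  by (metis vec.dim_subset subset_UNIV vec_dim_card)

text \<open>Grassmann's formula dim (U + V) + dim (U \<inter> V) = dim U + dim V, once per subspace.\<close>
lemma vec_codim_INT_le:
  fixes S :: "'x \<Rightarrow> ('a::field^'n) set"
  assumes "finite T" "\<And>x. x \<in> T \<Longrightarrow> vec.subspace (S x)"
  shows "CARD('n) - vec.dim (\<Inter>x\<in>T. S x) \<le> (\<Sum>x\<in>T. CARD('n) - vec.dim (S x))"
  using assms
proof (induction T rule: finite_induct)
  case empty
  then show ?case
    by (simp only: INT_empty sum.empty vec_dim_card diff_self_eq_0 le_refl)
next
  case (insert x T)
  let ?I = "\<Inter>x\<in>T. S x"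
  have "vec.subspace ?I"
    using insert.prems by (intro vec.subspace_Int) auto
  then have "vec.dim {a + b |a b. a \<in> S x \<and> b \<in> ?I} + vec.dim (S x \<inter> ?I) = vec.dim (S x) + vec.dim ?I"
    using insert.prems by (intro vec.dim_sums_Int) auto
  moreover have "vec.dim {a + b |a b. a \<in> S x \<and> b \<in> ?I} \<le> CARD('n)"
    by (rule vec_dim_le_card)
  moreover have "CARD('n) - vec.dim ?I \<le> (\<Sum>x\<in>T. CARD('n) - vec.dim (S x))"
    using insert.IH insert.prems by blast
  moreover have "vec.dim (S x) \<le> CARD('n)" "vec.dim ?I \<le> CARD('n)"
    by (rule vec_dim_le_card)+
  moreover have "(\<Sum>y\<in>insert x T. CARD('n) - vec.dim (S y))
      = (CARD('n) - vec.dim (S x)) + (\<Sum>y\<in>T. CARD('n) - vec.dim (S y))"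
    using insert.hyps by (rule sum.insert)
  ultimately show ?case
    unfolding INT_insert by arith
qed

lemma vec_common_nonzero_vector:
  fixes S :: "'x \<Rightarrow> ('a::field^'n) set"
  assumes "finite T" "\<And>x. x \<in> T \<Longrightarrow> vec.subspace (S x)"
    and "(\<Sum>x\<in>T. CARD('n) - vec.dim (S x)) < CARD('n)"
  shows "\<exists>u. u \<noteq> 0 \<and> (\<forall>x\<in>T. u \<in> S x)"
proof -
  have "CARD('n) - vec.dim (\<Inter>x\<in>T. S x) \<le> (\<Sum>x\<in>T. CARD('n) - vec.dim (S x))"
    using assms(1,2) by (rule vec_codim_INT_le)
  then have "vec.dim (\<Inter>x\<in>T. S x) \<noteq> 0"
    using assms(3) by linarith
  then obtain u where "u \<in> (\<Inter>x\<in>T. S x)" "u \<noteq> 0"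
    unfolding vec.dim_eq_0 by blast
  then show ?thesis
    by blast
qed

lemma rank_le_card: "rank (M::'a::field^'n^'m) \<le> CARD('n)"
  by (simp add: row_rank_def_gen vec_dim_le_card)

section \<open>Deterministic strategies\<close>

lemma finite_tuples: "finite (tuples n K)"
  by (simp add: tuples_def finite_PiE)

lemma card_tuples: "card (tuples n K) = (\<Prod>i<n. K i)"
  by (simp add: tuples_def card_PiE)

lemma tuples_nonempty: "\<forall>i<n. K i \<ge> 1 \<Longrightarrow> tuples n K \<noteq> {}"
  by (force simp: tuples_def PiE_eq_empty_iff lessThan_empty_iff)

lemma sum_uniform_fibers:
  assumes "finite S" "finite T" "f ` S \<subseteq> T" "\<And>t. t \<in> T \<Longrightarrow> card {s \<in> S. f s = t} = k"
  shows "(\<Sum>s\<in>S. c (f s)) = of_nat k * (\<Sum>t\<in>T. c t)"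
proof -
  have "(\<Sum>s\<in>S. c (f s)) = (\<Sum>t\<in>T. \<Sum>s\<in>{s \<in> S. f s = t}. c (f s))"
    using assms(1-3) by (rule sum.group[symmetric])
  also have "\<dots> = (\<Sum>t\<in>T. of_nat k * c t)"
    using assms(4) by (intro sum.cong) auto
  finally show ?thesis
    by (simp add: sum_distrib_left)
qed

definition strategies :: "nat \<Rightarrow> (nat \<Rightarrow> nat) \<Rightarrow> (nat \<Rightarrow> nat) \<Rightarrow> (nat \<Rightarrow> nat \<Rightarrow> nat) set" where
  "strategies n A X = PiE {..<n} (\<lambda>i. {..<X i} \<rightarrow>\<^sub>E {..<A i})"

definition response :: "nat \<Rightarrow> (nat \<Rightarrow> nat \<Rightarrow> nat) \<Rightarrow> (nat \<Rightarrow> nat) \<Rightarrow> nat \<Rightarrow> nat" where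
  "response n g x = (\<lambda>i\<in>{..<n}. g i (x i))"

lemma finite_strategies: "finite (strategies n A X)"
  by (simp add: strategies_def finite_PiE)

lemma response_in_tuples:
  "g \<in> strategies n A X \<Longrightarrow> x \<in> tuples n X \<Longrightarrow> response n g x \<in> tuples n A"
  by (auto simp: strategies_def tuples_def response_def PiE_iff)

lemma response_eq_iff:
  "a \<in> tuples n A \<Longrightarrow> response n g x = a \<longleftrightarrow> (\<forall>i<n. g i (x i) = a i)"
  by (auto simp: response_def tuples_def PiE_iff fun_eq_iff extensional_def)

lemma strategies_nonempty: "\<forall>i<n. A i \<ge> 1 \<Longrightarrow> strategies n A X \<noteq> {}"
proof -
  assume "\<forall>i<n. A i \<ge> 1"
  then have "(\<lambda>i\<in>{..<n}. \<lambda>y\<in>{..<X i}. 0) \<in> strategies n A X"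
    by (auto simp: strategies_def PiE_iff)
  then show ?thesis
    by blast
qed

lemma strategy_range: "g \<in> strategies n A X \<Longrightarrow> i < n \<Longrightarrow> y < X i \<Longrightarrow> g i y < A i"
  by (auto simp: strategies_def PiE_iff)

text \<open>Changing the answers to the fixed questions x maps the strategies responding a to x
  bijectively onto those responding b.\<close>
lemma card_response_fiber_eq:
  assumes x: "x \<in> tuples n X" and a: "a \<in> tuples n A" and b: "b \<in> tuples n A"
  shows "card {g \<in> strategies n A X. response n g x = a} = card {g \<in> strategies n A X. response n g x = b}"
proof -
  define redirect :: "(nat \<Rightarrow> nat) \<Rightarrow> (nat \<Rightarrow> nat \<Rightarrow> nat) \<Rightarrow> nat \<Rightarrow> nat \<Rightarrow> nat"
    where "redirect c g = (\<lambda>i. if i < n then (g i)(x i := c i) else g i)" for c g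
  have redirect_fiber: "redirect d g \<in> {g \<in> strategies n A X. response n g x = d}"
    if d: "d \<in> tuples n A" and g: "g \<in> strategies n A X" for d g
  proof -
    have "(g i)(x i := d i) \<in> {..<X i} \<rightarrow>\<^sub>E {..<A i}" if "i < n" for i
    proof -
      have "x i \<in> {..<X i}" "d i \<in> {..<A i}"
        using x d \<open>i < n\<close> by (auto simp: tuples_def PiE_iff)
      then show ?thesis
        using PiE_fun_upd[of "d i" "\<lambda>_. {..<A i}" "x i" "g i" "{..<X i}"] g \<open>i < n\<close>
        by (simp add: strategies_def PiE_iff insert_absorb)
    qed
    then have "redirect d g \<in> strategies n A X"
      using g by (auto simp: strategies_def redirect_def PiE_iff extensional_def)
    then show ?thesis
      using d by (simp add: response_eq_iff redirect_def)
  qed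
  have redirect_back: "redirect c (redirect d g) = g"
    if "c \<in> tuples n A" "g \<in> {g \<in> strategies n A X. response n g x = c}" for c d g
  proof -
    have "\<forall>i<n. g i (x i) = c i"
      using that response_eq_iff by blast
    then show ?thesis
      by (auto simp: redirect_def fun_eq_iff)
  qed
  have "bij_betw (redirect b) {g \<in> strategies n A X. response n g x = a}
      {g \<in> strategies n A X. response n g x = b}"
    by (rule bij_betw_byWitness[where f'="redirect a"])
      (use a b redirect_fiber redirect_back in auto)
  then show ?thesis
    by (rule bij_betw_same_card)
qed

lemma card_tuples_mult_sum_response:
  fixes c :: "(nat \<Rightarrow> nat) \<Rightarrow> nat"
  assumes x: "x \<in> tuples n X" and A: "\<forall>i<n. A i \<ge> 1"
  shows "card (tuples n A) * (\<Sum>g\<in>strategies n A X. c (response n g x))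
       = card (strategies n A X) * (\<Sum>a\<in>tuples n A. c a)"
proof -
  obtain a0 where a0: "a0 \<in> tuples n A"
    using tuples_nonempty[OF A] by blast
  define k where "k = card {g \<in> strategies n A X. response n g x = a0}"
  have fibers: "card {g \<in> strategies n A X. response n g x = a} = k" if "a \<in> tuples n A" for a
    using card_response_fiber_eq[OF x that a0] by (simp add: k_def)
  have image: "(\<lambda>g. response n g x) ` strategies n A X \<subseteq> tuples n A"
    using response_in_tuples x by blast
  have "(\<Sum>g\<in>strategies n A X. c (response n g x)) = k * (\<Sum>a\<in>tuples n A. c a)"
    using sum_uniform_fibers[OF finite_strategies finite_tuples image fibers, of c] by simp
  moreover have "card (strategies n A X) = k * card (tuples n A)"
    using sum_uniform_fibers[OF finite_strategies finite_tuples image fibers, of "\<lambda>_. 1::nat"] by simp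
  ultimately show ?thesis
    by simp
qed

lemma exists_strategy_sum_response_less:
  fixes c :: "(nat \<Rightarrow> nat) \<Rightarrow> (nat \<Rightarrow> nat) \<Rightarrow> nat"
  assumes A: "\<forall>i<n. A i \<ge> 1"
    and less: "(\<Sum>x\<in>tuples n X. \<Sum>a\<in>tuples n A. c a x) < card (tuples n A) * D"
  shows "\<exists>g\<in>strategies n A X. (\<Sum>x\<in>tuples n X. c (response n g x) x) < D"
proof -
  let ?S = "strategies n A X"
  define F where "F g = (\<Sum>x\<in>tuples n X. c (response n g x) x)" for g
  have S: "card ?S > 0"
    using strategies_nonempty[OF A] finite_strategies by (simp add: card_gt_0_iff)
  have "card (tuples n A) * (\<Sum>g\<in>?S. F g)
      = (\<Sum>x\<in>tuples n X. card (tuples n A) * (\<Sum>g\<in>?S. c (response n g x) x))"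
    unfolding F_def by (subst sum.swap) (simp add: sum_distrib_left)
  also have "\<dots> = (\<Sum>x\<in>tuples n X. card ?S * (\<Sum>a\<in>tuples n A. c a x))"
    by (intro sum.cong refl card_tuples_mult_sum_response[OF _ A])
  also have "\<dots> = card ?S * (\<Sum>x\<in>tuples n X. \<Sum>a\<in>tuples n A. c a x)"
    by (simp add: sum_distrib_left)
  also have "\<dots> < card (tuples n A) * (card ?S * D)"
    using less S by simp
  finally have "(\<Sum>g\<in>?S. F g) < card ?S * D"
    by simp
  then show ?thesis
    using sum_bounded_below[of ?S D F] by (auto simp: F_def not_le[symmetric])
qed

lemma sum_deficiency_less:
  fixes f :: "'a \<Rightarrow> 'b \<Rightarrow> nat"
  assumes S: "finite S" and T: "finite T" and le: "\<And>s t. f s t \<le> d"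
    and greater: "(card T - 1) * card S * d < (\<Sum>s\<in>S. \<Sum>t\<in>T. f s t)"
  shows "(\<Sum>t\<in>T. \<Sum>s\<in>S. d - f s t) < card S * d"
proof -
  have "(\<Sum>t\<in>T. \<Sum>s\<in>S. d - f s t) + (\<Sum>s\<in>S. \<Sum>t\<in>T. f s t) = (\<Sum>t\<in>T. \<Sum>s\<in>S. d)"
    by (subst sum.swap[of _ S]) (simp add: sum.distrib[symmetric] le)
  also have "\<dots> = card T * card S * d"
    by simp
  finally have "(\<Sum>t\<in>T. \<Sum>s\<in>S. d - f s t) + (\<Sum>s\<in>S. \<Sum>t\<in>T. f s t) = card T * card S * d" .
  moreover have "card T \<noteq> 0"
    using greater by (auto simp: T)
  ultimately show ?thesis
    using greater by (cases "card T") (auto simp: algebra_simps)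
qed

section \<open>Assemblages\<close>

lemma trace_scaleR: "trace ((c::real) *\<^sub>R (M::complex^'n^'n)) = of_real c * trace M"
  by (simp add: trace_def sum_distrib_left scaleR_conv_of_real[where 'a=complex])

lemma marginal_scaleR_diff:
  "marginal n A I (\<lambda>a x. c *\<^sub>R (\<sigma> a x - e *\<^sub>R \<tau> a x)) a x
     = c *\<^sub>R (marginal n A I \<sigma> a x - e *\<^sub>R marginal n A I \<tau> a x)"
  by (simp add: marginal_def scaleR_sum_right scaleR_diff_right sum_subtractf)

lemma no_signaling_psd: "no_signaling n A X \<sigma> \<Longrightarrow> a \<in> tuples n A \<Longrightarrow> x \<in> tuples n X \<Longrightarrow> psd (\<sigma> a x)"
  by (simp add: no_signaling_def)

lemma no_signaling_marginal:
  "no_signaling n A X \<sigma> \<Longrightarrow> I \<subseteq> {..<n} \<Longrightarrow> I \<noteq> {} \<Longrightarrow> I \<noteq> {..<n} \<Longrightarrow>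
    a \<in> tuples n A \<Longrightarrow> a' \<in> tuples n A \<Longrightarrow> x \<in> tuples n X \<Longrightarrow> x' \<in> tuples n X \<Longrightarrow>
    (\<forall>i\<in>I. a i = a' i \<and> x i = x' i) \<Longrightarrow> marginal n A I \<sigma> a x = marginal n A I \<sigma> a' x'"
  unfolding no_signaling_def by blast

lemma no_signaling_remainder:
  assumes \<sigma>: "no_signaling n A X \<sigma>" and \<tau>: "no_signaling n A X \<tau>"
    and e: "0 \<le> e" "e < 1" and X: "tuples n X \<noteq> {}"
    and psd_diff: "\<And>a x. a \<in> tuples n A \<Longrightarrow> x \<in> tuples n X \<Longrightarrow> psd (\<sigma> a x - e *\<^sub>R \<tau> a x)"
  shows "no_signaling n A X (\<lambda>a x. (1 / (1 - e)) *\<^sub>R (\<sigma> a x - e *\<^sub>R \<tau> a x))"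
proof -
  obtain \<rho>\<sigma> where \<rho>\<sigma>: "density \<rho>\<sigma>" "\<And>x. x \<in> tuples n X \<Longrightarrow> (\<Sum>a\<in>tuples n A. \<sigma> a x) = \<rho>\<sigma>"
    using \<sigma> by (auto simp: no_signaling_def)
  obtain \<rho>\<tau> where \<rho>\<tau>: "density \<rho>\<tau>" "\<And>x. x \<in> tuples n X \<Longrightarrow> (\<Sum>a\<in>tuples n A. \<tau> a x) = \<rho>\<tau>"
    using \<tau> by (auto simp: no_signaling_def)
  define \<rho> where "\<rho> = (1 / (1 - e)) *\<^sub>R (\<rho>\<sigma> - e *\<^sub>R \<rho>\<tau>)"
  have sum_eq: "(\<Sum>a\<in>tuples n A. (1 / (1 - e)) *\<^sub>R (\<sigma> a x - e *\<^sub>R \<tau> a x)) = \<rho>"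
    if "x \<in> tuples n X" for x
    using \<rho>\<sigma>(2)[OF that] \<rho>\<tau>(2)[OF that]
    by (simp add: \<rho>_def scaleR_sum_right[symmetric] sum_subtractf)
  have "density \<rho>"
  proof -
    obtain x0 where x0: "x0 \<in> tuples n X"
      using X by blast
    have "psd \<rho>"
      unfolding sum_eq[OF x0, symmetric] using e psd_diff x0
      by (intro psd_sum psd_scaleR) auto
    moreover have "trace \<rho> = 1"
      using \<rho>\<sigma>(1) \<rho>\<tau>(1) e by (simp add: \<rho>_def density_def trace_scaleR trace_sub field_simps)
    ultimately show ?thesis
      by (simp add: density_def)
  qed
  then show ?thesis
    unfolding no_signaling_def
  proof (intro conjI ballI allI impI exI)
    show "psd ((1 / (1 - e)) *\<^sub>R (\<sigma> a x - e *\<^sub>R \<tau> a x))"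
      if "a \<in> tuples n A" "x \<in> tuples n X" for a x
      using psd_diff[OF that] e by (intro psd_scaleR) auto
    show "(\<Sum>a\<in>tuples n A. (1 / (1 - e)) *\<^sub>R (\<sigma> a x - e *\<^sub>R \<tau> a x)) = \<rho>"
      if "x \<in> tuples n X" for x
      using that by (rule sum_eq)
    show "marginal n A I (\<lambda>a x. (1 / (1 - e)) *\<^sub>R (\<sigma> a x - e *\<^sub>R \<tau> a x)) a x
        = marginal n A I (\<lambda>a x. (1 / (1 - e)) *\<^sub>R (\<sigma> a x - e *\<^sub>R \<tau> a x)) a' x'"
      if "I \<subseteq> {..<n} \<and> I \<noteq> {} \<and> I \<noteq> {..<n}" "a \<in> tuples n A" "a' \<in> tuples n A"
        "x \<in> tuples n X" "x' \<in> tuples n X" "\<forall>i\<in>I. a i = a' i \<and> x i = x' i" for I a a' x x'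
    proof -
      have "marginal n A I \<sigma> a x = marginal n A I \<sigma> a' x'"
        by (rule no_signaling_marginal[OF \<sigma>]) (use that in auto)
      moreover have "marginal n A I \<tau> a x = marginal n A I \<tau> a' x'"
        by (rule no_signaling_marginal[OF \<tau>]) (use that in auto)
      ultimately show ?thesis
        unfolding marginal_scaleR_diff by simp
    qed
  qed
qed

definition deterministic :: "nat \<Rightarrow> (nat \<Rightarrow> nat \<Rightarrow> nat) \<Rightarrow> complex^'d^'d \<Rightarrow>
    (nat \<Rightarrow> nat) \<Rightarrow> (nat \<Rightarrow> nat) \<Rightarrow> complex^'d^'d" where
  "deterministic n g \<rho> a x = (if a = response n g x then \<rho> else 0)"

lemma LHS_deterministic:
  assumes g: "g \<in> strategies n A X" and \<rho>: "density \<rho>"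
  shows "LHS n A X (deterministic n g \<rho>)"
proof -
  define p :: "nat \<Rightarrow> nat \<Rightarrow> nat \<Rightarrow> nat \<Rightarrow> real" where
    "p j i ai xi = (if ai = g i xi then 1 else 0)" for j i ai xi
  have "deterministic n g \<rho> a x = (\<Prod>i<n. p 0 i (a i) (x i)) *\<^sub>R \<rho>" if "a \<in> tuples n A" for a x
  proof -
    have "(\<Prod>i<n. p 0 i (a i) (x i)) = (if \<forall>i<n. a i = g i (x i) then 1 else 0)"
      unfolding p_def by (induction n) (auto simp: less_Suc_eq)
    then show ?thesis
      using response_eq_iff[OF that, of g x] by (auto simp: deterministic_def)
  qed
  then show ?thesis
    unfolding LHS_def using \<rho> strategy_range[OF g]
    by (intro exI[of _ "1::nat"] exI[of _ "\<lambda>_. 1::real"] exI[of _ p] exI[of _ "\<lambda>_. \<rho>"])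
      (simp add: p_def)
qed

lemma marginal_deterministic:
  assumes "g \<in> strategies n A X" "x \<in> tuples n X" "I \<subseteq> {..<n}"
  shows "marginal n A I (deterministic n g \<rho>) a x = (if \<forall>i\<in>I. g i (x i) = a i then \<rho> else 0)"
proof -
  have "marginal n A I (deterministic n g \<rho>) a x
      = (if response n g x \<in> {b \<in> tuples n A. \<forall>i\<in>I. b i = a i} then \<rho> else 0)"
    unfolding marginal_def deterministic_def by (simp add: finite_tuples)
  then show ?thesis
    using assms response_in_tuples[OF assms(1,2)] by (auto simp: response_def)
qed

lemma no_signaling_deterministic:
  assumes g: "g \<in> strategies n A X" and \<rho>: "density \<rho>"
  shows "no_signaling n A X (deterministic n g \<rho>)"
  unfolding no_signaling_def
proof (intro conjI ballI allI impI exI)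
  show "psd (deterministic n g \<rho> a x)" for a x
    using \<rho> by (simp add: deterministic_def density_def psd_0)
  show "density \<rho>"
    by (fact \<rho>)
  show "(\<Sum>a\<in>tuples n A. deterministic n g \<rho> a x) = \<rho>" if "x \<in> tuples n X" for x
    using response_in_tuples[OF g that] by (simp add: deterministic_def finite_tuples)
  show "marginal n A I (deterministic n g \<rho>) a x = marginal n A I (deterministic n g \<rho>) a' x'"
    if "I \<subseteq> {..<n} \<and> I \<noteq> {} \<and> I \<noteq> {..<n}" "x \<in> tuples n X" "x' \<in> tuples n X"
      "\<forall>i\<in>I. a i = a' i \<and> x i = x' i" for I a a' x x'
    using that by (simp add: marginal_deterministic[OF g])
qed

lemma on_edge_no_deterministic_part:
  assumes edge: "on_edge n A X \<sigma>" and \<sigma>: "no_signaling n A X \<sigma>" and X: "tuples n X \<noteq> {}"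
    and g: "g \<in> strategies n A X" and \<rho>: "density \<rho>" and e: "0 \<le> e" "e < 1"
    and psd_diff: "\<And>x. x \<in> tuples n X \<Longrightarrow> psd (\<sigma> (response n g x) x - e *\<^sub>R \<rho>)"
  shows "e = 0"
proof -
  let ?\<tau> = "deterministic n g \<rho>"
  have "psd (\<sigma> a x - e *\<^sub>R ?\<tau> a x)" if "a \<in> tuples n A" "x \<in> tuples n X" for a x
    using psd_diff[OF that(2)] no_signaling_psd[OF \<sigma> that] by (simp add: deterministic_def)
  then have "no_signaling n A X (\<lambda>a x. (1 / (1 - e)) *\<^sub>R (\<sigma> a x - e *\<^sub>R ?\<tau> a x))"
    using no_signaling_remainder[OF \<sigma> no_signaling_deterministic[OF g \<rho>] e X] by blast
  moreover have "\<sigma> a x = e *\<^sub>R ?\<tau> a x + (1 - e) *\<^sub>R ((1 / (1 - e)) *\<^sub>R (\<sigma> a x - e *\<^sub>R ?\<tau> a x))" for a x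
    using e by simp
  ultimately show ?thesis
    using edge e LHS_deterministic[OF g \<rho>] unfolding on_edge_def by (meson less_eq_real_def)
qed

theorem corollary1:
  fixes n :: nat and A X :: "nat \<Rightarrow> nat"
    and \<sigma> :: "(nat \<Rightarrow> nat) \<Rightarrow> (nat \<Rightarrow> nat) \<Rightarrow> complex^'d^'d"
  assumes "n \<ge> 1"
    and "\<forall>i<n. A i \<ge> 1" and "\<forall>i<n. X i \<ge> 1"
    and "no_signaling n A X \<sigma>"
    and "on_edge n A X \<sigma>"
  shows "(\<Sum>a\<in>tuples n A. \<Sum>x\<in>tuples n X. rank (\<sigma> a x))
           \<le> ((\<Prod>i<n. X i) - 1) * (\<Prod>i<n. A i) * CARD('d)"
proof (rule ccontr)
  assume "\<not> ?thesis"
  then have "(\<Sum>x\<in>tuples n X. \<Sum>a\<in>tuples n A. CARD('d) - rank (\<sigma> a x)) < card (tuples n A) * CARD('d)"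
    by (intro sum_deficiency_less) (simp_all add: finite_tuples card_tuples rank_le_card)
  then obtain g where g: "g \<in> strategies n A X"
    and "(\<Sum>x\<in>tuples n X. CARD('d) - rank (\<sigma> (response n g x) x)) < CARD('d)"
    using exists_strategy_sum_response_less[OF assms(2), where c="\<lambda>a x. CARD('d) - rank (\<sigma> a x)"]
    by blast
  then obtain u where "u \<noteq> 0" and u: "\<forall>x\<in>tuples n X. u \<in> vec.span (rows (\<sigma> (response n g x) x))"
    using vec_common_nonzero_vector[of "tuples n X" "\<lambda>x. vec.span (rows (\<sigma> (response n g x) x))"]
    by (auto simp: finite_tuples row_rank_def_gen)
  have psd_response: "psd (\<sigma> (response n g x) x)" if "x \<in> tuples n X" for x
    using no_signaling_psd[OF assms(4) response_in_tuples[OF g that] that] .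
  have "\<exists>w. \<sigma> (response n g x) x *v w = vcnj u" if "x \<in> tuples n X" for x
    using psd_vcnj_row_space_in_range[OF psd_response[OF that]] u that by blast
  then obtain e where e: "e > 0" "e < 1"
    and "\<forall>x\<in>tuples n X. psd (\<sigma> (response n g x) x - e *\<^sub>R proj (vcnj u))"
    using psd_diff_proj_common[of "tuples n X" "\<lambda>x. \<sigma> (response n g x) x" "vcnj u"]
      finite_tuples psd_response \<open>u \<noteq> 0\<close> by auto
  then have "e = 0"
    using \<open>u \<noteq> 0\<close> by (intro on_edge_no_deterministic_part[OF assms(5,4) tuples_nonempty[OF assms(3)] g
      density_proj[of "vcnj u"]]) auto
  with e show False
    by simp
qed

end
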